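(* Suppose $S\subseteq\mathbb{N}^{\mathbb{N}}$ is defined by a sentence $\exists x\,\forall y\,\phi$ of $\mathscr{L}_{\max}$, where $\phi$ is quantifier-free. Then $S$ is overguessable.
   Context: $\mathbb{N}^{<\mathbb{N}}$ denotes the finite sequences of naturals. $S\subseteq\mathbb{N}^{\mathbb{N}}$ is overguessable if there is a function $\mu:\mathbb{N}^{<\mathbb{N}}\to\mathbb{N}\cup\{\infty\}$ such that (1) for every $f\in S$, the values $\mu(f(0),\ldots,f(n))$ are bounded by some finite number for all sufficiently large $n$; and (2) for every $f\notin S$, $\mu(f(0),\ldots,f(n))\to\infty$ as $n\to\infty$. The language $\mathscr{L}_{\max}$ is a first-order language extended with ellipses: constant symbols $\mathbf{n}$ (also $\bar n$) for each $n\in\mathbb{N}$; an $n$-ary function symbol $\tilde w$ for each $w:\mathbb{N}^n\to\mathbb{N}$ ($n>0$); an $n$-ary predicate symbol $\tilde p$ for each $p\subseteq\mathbb{N}^n$ ($n>0$); an $\mathbb{N}^{<\mathbb{N}}$-ary function symbol $\tilde G$ for each $G:\mathbb{N}^{<\mathbb{N}}\to\mathbb{N}$ (applicable to any finite number of arguments); a unary function symbol $\mathbf{f}$; and a symbol $\cdots_x$ for each variable $x$. Besides the usual terms, for $\mathbb{N}^{<\mathbb{N}}$-ary $G$, terms $u,v$ and variable $x$, $G(u(\mathbf{0}),\cdots_x,u(v))$ is a term with free variables $(FV(u)\setminus\{x\})\cup FV(v)$. Formulas are built as usual. For $f:\mathbb{N}\to\mathbb{N}$, $\mathscr{M}_f$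 is the structure on $\mathbb{N}$ interpreting every symbol as the object it names and $\mathbf{f}$ as $f$; terms are evaluated as usual, plus $G(u(\mathbf{0}),\cdots_x,u(v))^{s}=G\big(u(x|\mathbf{0})^{s},\ldots,u(x|\overline{v^{s}})^{s}\big)$ under an assignment $s$, where $u(x|c)$ is substitution of the constant $c$ for $x$ in $u$. A sentence $\phi$ defines $S\subseteq\mathbb{N}^{\mathbb{N}}$ if for every $f:\mathbb{N}\to\mathbb{N}$, $\mathscr{M}_f\models\phi$ iff $f\in S$. *)

theory Defs
  imports Main "HOL-Library.Extended_Nat"
begin

text \<open>Fn w ts : an n-ary function symbol (n = length ts > 0) naming w : N^n -> N,
            where w is given as a function on lists of length n.
  GFn G ts : an N^{<N}-ary function symbol naming G, applied to finitely many args.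
  Ell G u x v : the ellipsis term G(u(0), ..._x, u(v)).\<close>
datatype trm =
    Var nat
  | Cst nat
  | Fn "nat list \<Rightarrow> nat" "trm list"
  | GFn "nat list \<Rightarrow> nat" "trm list"
  | FSym trm
  | Ell "nat list \<Rightarrow> nat" trm nat trm

datatype fml =
    Eq trm trm
  | Pred "nat list \<Rightarrow> bool" "trm list"
  | Neg fml
  | Conj fml fml
  | Disj fml fml
  | Imp fml fml
  | All nat fml
  | Ex nat fml

fun FVt :: "trm \<Rightarrow> nat set" where
  "FVt (Var x) = {x}"
| "FVt (Cst n) = {}"
| "FVt (Fn w ts) = (\<Union>t\<in>set ts. FVt t)"
| "FVt (GFn G ts) = (\<Union>t\<in>set ts. FVt t)"
| "FVt (FSym t) = FVt t"
| "FVt (Ell G u x v) = (FVt u - {x}) \<union> FVt v"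

fun wf_trm :: "trm \<Rightarrow> bool" where
  "wf_trm (Var x) = True"
| "wf_trm (Cst n) = True"
| "wf_trm (Fn w ts) = (ts \<noteq> [] \<and> (\<forall>t\<in>set ts. wf_trm t))"
| "wf_trm (GFn G ts) = (\<forall>t\<in>set ts. wf_trm t)"
| "wf_trm (FSym t) = wf_trm t"
| "wf_trm (Ell G u x v) = (wf_trm u \<and> wf_trm v)"

fun FV :: "fml \<Rightarrow> nat set" where
  "FV (Eq s t) = FVt s \<union> FVt t"
| "FV (Pred p ts) = (\<Union>t\<in>set ts. FVt t)"
| "FV (Neg a) = FV a"
| "FV (Conj a b) = FV a \<union> FV b"
| "FV (Disj a b) = FV a \<union> FV b"
| "FV (Imp a b) = FV a \<union> FV b"
| "FV (All x a) = FV a - {x}"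
| "FV (Ex x a) = FV a - {x}"

fun wf_fml :: "fml \<Rightarrow> bool" where
  "wf_fml (Eq s t) = (wf_trm s \<and> wf_trm t)"
| "wf_fml (Pred p ts) = (ts \<noteq> [] \<and> (\<forall>t\<in>set ts. wf_trm t))"
| "wf_fml (Neg a) = wf_fml a"
| "wf_fml (Conj a b) = (wf_fml a \<and> wf_fml b)"
| "wf_fml (Disj a b) = (wf_fml a \<and> wf_fml b)"
| "wf_fml (Imp a b) = (wf_fml a \<and> wf_fml b)"
| "wf_fml (All x a) = wf_fml a"
| "wf_fml (Ex x a) = wf_fml a"

fun qfree :: "fml \<Rightarrow> bool" where
  "qfree (Eq s t) = True"
| "qfree (Pred p ts) = True"
| "qfree (Neg a) = qfree a"
| "qfree (Conj a b) = (qfree a \<and> qfree b)"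
| "qfree (Disj a b) = (qfree a \<and> qfree b)"
| "qfree (Imp a b) = (qfree a \<and> qfree b)"
| "qfree (All x a) = False"
| "qfree (Ex x a) = False"

definition sentence :: "fml \<Rightarrow> bool" where
  "sentence \<phi> \<longleftrightarrow> wf_fml \<phi> \<and> FV \<phi> = {}"

text \<open>Evaluation in M_f under assignment s. For the ellipsis term, substituting the
  constant c for (free occurrences of) x in u is evaluated as u under s(x := c).\<close>
fun evalt :: "(nat \<Rightarrow> nat) \<Rightarrow> (nat \<Rightarrow> nat) \<Rightarrow> trm \<Rightarrow> nat" where
  "evalt f s (Var x) = s x"
| "evalt f s (Cst n) = n"
| "evalt f s (Fn w ts) = w (map (evalt f s) ts)"
| "evalt f s (GFn G ts) = G (map (evalt f s) ts)"
| "evalt f s (FSym t) = f (evalt f s t)"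
| "evalt f s (Ell G u x v) = G (map (\<lambda>i. evalt f (s(x := i)) u) [0..<Suc (evalt f s v)])"

fun sat :: "(nat \<Rightarrow> nat) \<Rightarrow> (nat \<Rightarrow> nat) \<Rightarrow> fml \<Rightarrow> bool" where
  "sat f s (Eq a b) = (evalt f s a = evalt f s b)"
| "sat f s (Pred p ts) = p (map (evalt f s) ts)"
| "sat f s (Neg a) = (\<not> sat f s a)"
| "sat f s (Conj a b) = (sat f s a \<and> sat f s b)"
| "sat f s (Disj a b) = (sat f s a \<or> sat f s b)"
| "sat f s (Imp a b) = (sat f s a \<longrightarrow> sat f s b)"
| "sat f s (All x a) = (\<forall>n. sat f (s(x := n)) a)"
| "sat f s (Ex x a) = (\<exists>n. sat f (s(x := n)) a)"

text \<open>M_f |= phi for a sentence phi (assignment irrelevant; we use the zero assignment).\<close>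
definition models :: "(nat \<Rightarrow> nat) \<Rightarrow> fml \<Rightarrow> bool" where
  "models f \<phi> \<longleftrightarrow> sat f (\<lambda>_. 0) \<phi>"

definition defines_set :: "fml \<Rightarrow> (nat \<Rightarrow> nat) set \<Rightarrow> bool" where
  "defines_set \<phi> S \<longleftrightarrow> sentence \<phi> \<and> (\<forall>f. models f \<phi> \<longleftrightarrow> f \<in> S)"

definition init :: "(nat \<Rightarrow> nat) \<Rightarrow> nat \<Rightarrow> nat list" where
  "init f n = map f [0..<Suc n]"

definition overguessable :: "(nat \<Rightarrow> nat) set \<Rightarrow> bool" where
  "overguessable S \<longleftrightarrow> (\<exists>\<mu> :: nat list \<Rightarrow> enat.
     (\<forall>f\<in>S. \<exists>B::nat. \<forall>\<^sub>F n in sequentially. \<mu> (init f n) \<le> enat B) \<and>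
     (\<forall>f. f \<notin> S \<longrightarrow> (\<forall>B::nat. \<forall>\<^sub>F n in sequentially. enat B \<le> \<mu> (init f n))))"

end

theory Submission
  imports Defs
begin

text \<open>A quantifier-free formula is evaluated at a fixed assignment by finitely many
  queries to \<open>f\<close>, so its truth value depends only on an initial segment of \<open>f\<close>.
  Hence for each witness \<open>a\<close> for \<open>x\<close> the set \<open>C a\<close> of functions satisfying
  \<open>\<forall>y \<phi>\<close> at \<open>x = a\<close> is closed in Baire space, and \<open>S = (\<Union>a. C a)\<close>. Such a countable
  union of closed sets is overguessed by \<open>\<mu>(\<sigma>)\<close> = the least \<open>a\<close> such that \<open>\<sigma>\<close> extends to
  a member of \<open>C a\<close> (capped at the length of \<open>\<sigma>\<close>): along \<open>f \<in> C a\<close> it stays \<open>\<le> a\<close>,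
  and along \<open>f \<notin> S\<close> every fixed \<open>a\<close> is eventually ruled out by closedness.\<close>

definition agree_nhds :: "(nat \<Rightarrow> 'a) \<Rightarrow> (nat \<Rightarrow> 'a) filter" where
  "agree_nhds f = (INF N. principal {g. \<forall>i\<le>N. g i = f i})"

lemma eventually_agree_nhds:
  "(\<forall>\<^sub>F g in agree_nhds f. P g) \<longleftrightarrow> (\<exists>N. \<forall>g. (\<forall>i\<le>N. g i = f i) \<longrightarrow> P g)"
proof -
  have "\<exists>K. principal {g. \<forall>i\<le>K. g i = f i}
           \<le> inf (principal {g. \<forall>i\<le>M. g i = f i}) (principal {g. \<forall>i\<le>N. g i = f i})" for M N
    by (intro exI[of _ "max M N"]) auto
  then show ?thesis
    unfolding agree_nhds_def by (subst eventually_INF_base) (auto simp: eventually_principal)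
qed

lemma eventually_agree_nhds_apply: "\<forall>\<^sub>F g in agree_nhds f. g i = f i"
  unfolding eventually_agree_nhds by blast

lemma eventually_evalt_agree:
  "\<forall>\<^sub>F g in agree_nhds f. evalt g s t = evalt f s t"
proof (induction t arbitrary: s)
  case (Fn w ts)
  then have "\<forall>\<^sub>F g in agree_nhds f. \<forall>t\<in>set ts. evalt g s t = evalt f s t"
    by (intro eventually_ball_finite) auto
  then show ?case
    by eventually_elim (simp cong: map_cong)
next
  case (GFn G ts)
  then have "\<forall>\<^sub>F g in agree_nhds f. \<forall>t\<in>set ts. evalt g s t = evalt f s t"
    by (intro eventually_ball_finite) auto
  then show ?case
    by eventually_elim (simp cong: map_cong)
next
  case (FSym t)
  from FSym.IH[of s] eventually_agree_nhds_apply[where f = f and i = "evalt f s t"] show ?case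
    by eventually_elim simp
next
  case (Ell G u x v)
  have "\<forall>\<^sub>F g in agree_nhds f. \<forall>i\<in>set [0..<Suc (evalt f s v)].
          evalt g (s(x := i)) u = evalt f (s(x := i)) u"
    using Ell.IH(1) by (intro eventually_ball_finite) auto
  with Ell.IH(2)[of s] show ?case
    by eventually_elim (auto simp del: upt_Suc intro!: arg_cong[where f = G] map_cong)
qed simp_all

lemma eventually_sat_agree:
  assumes "qfree \<phi>"
  shows "\<forall>\<^sub>F g in agree_nhds f. sat g s \<phi> \<longleftrightarrow> sat f s \<phi>"
  using assms
proof (induction \<phi>)
  case (Eq a b)
  from eventually_evalt_agree[where s = s and t = a] eventually_evalt_agree[where s = s and t = b]
  show ?case
    by eventually_elim simp
next
  case (Pred p ts)
  have "\<forall>\<^sub>F g in agree_nhds f. \<forall>t\<in>set ts. evalt g s t = evalt f s t"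
    by (intro eventually_ball_finite) (auto intro: eventually_evalt_agree)
  then show ?case
    by eventually_elim (simp cong: map_cong)
next
  case (Neg a)
  then show ?case by simp
next
  case (Conj a b)
  then show ?case by (auto elim: eventually_elim2)
next
  case (Disj a b)
  then show ?case by (auto elim: eventually_elim2)
next
  case (Imp a b)
  then show ?case by (auto elim: eventually_elim2)
qed simp_all

lemma length_init: "length (init f n) = Suc n"
  unfolding init_def by simp

lemma init_eq_map_iff: "init f n = map g [0..<Suc n] \<longleftrightarrow> (\<forall>i\<le>n. g i = f i)"
  unfolding init_def by (auto simp del: upt_Suc simp: map_eq_conv)

text \<open>The hypothesis says that each \<open>C a\<close> is closed in Baire space.\<close>

lemma overguessable_UN_closed:
  fixes C :: "nat \<Rightarrow> (nat \<Rightarrow> nat) set"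
  assumes closed: "\<And>a f. f \<notin> C a \<Longrightarrow> \<forall>\<^sub>F g in agree_nhds f. g \<notin> C a"
  shows "overguessable (\<Union>a. C a)"
proof -
  define \<mu> where
    "\<mu> \<sigma> = (LEAST a. a = length \<sigma> \<or> (\<exists>g\<in>C a. map g [0..<length \<sigma>] = \<sigma>))" for \<sigma>
  have bounded: "\<mu> (init f n) \<le> a" if "f \<in> C a" "a \<le> n" for f a n
    unfolding \<mu>_def using that by (intro Least_le) (auto simp: init_def)
  have unbounded: "\<forall>\<^sub>F n in sequentially. B \<le> \<mu> (init f n)" if "f \<notin> (\<Union>a. C a)" for f B
  proof -
    have "\<forall>\<^sub>F g in agree_nhds f. \<forall>a\<in>{..<B}. g \<notin> C a"
      using that by (intro eventually_ball_finite) (auto intro: closed)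
    then obtain N where N: "\<And>g a. \<forall>i\<le>N. g i = f i \<Longrightarrow> a < B \<Longrightarrow> g \<notin> C a"
      unfolding eventually_agree_nhds by auto
    have "B \<le> \<mu> (init f n)" if "max N B \<le> n" for n
      unfolding \<mu>_def
    proof (rule LeastI2[of _ "length (init f n)"])
      fix a assume "a = length (init f n) \<or> (\<exists>g\<in>C a. map g [0..<length (init f n)] = init f n)"
      then show "B \<le> a"
      proof
        assume "\<exists>g\<in>C a. map g [0..<length (init f n)] = init f n"
        then obtain g where "g \<in> C a" "init f n = map g [0..<Suc n]"
          by (auto simp: length_init)
        with N[of g a] init_eq_map_iff \<open>max N B \<le> n\<close> show "B \<le> a" by fastforce
      qed (use \<open>max N B \<le> n\<close> in \<open>simp add: length_init\<close>)
    qed simp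
    then show ?thesis
      unfolding eventually_sequentially by blast
  qed
  show ?thesis
    unfolding overguessable_def
  proof (intro exI[of _ "\<lambda>\<sigma>. enat (\<mu> \<sigma>)"] conjI ballI allI impI)
    fix f assume "f \<in> (\<Union>a. C a)"
    then obtain a where "f \<in> C a" by blast
    then show "\<exists>B. \<forall>\<^sub>F n in sequentially. enat (\<mu> (init f n)) \<le> enat B"
      by (intro exI[of _ a]) (auto simp: eventually_sequentially intro: bounded)
  next
    fix f B assume "f \<notin> (\<Union>a. C a)"
    from unbounded[OF this, of B] show "\<forall>\<^sub>F n in sequentially. enat B \<le> enat (\<mu> (init f n))"
      by simp
  qed
qed

theorem lemma4p4:
  fixes S :: "(nat \<Rightarrow> nat) set" and x y :: nat and \<phi> :: fml
  assumes "qfree \<phi>"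
    and "defines_set (Ex x (All y \<phi>)) S"
  shows "overguessable S"
proof -
  define C where "C a = {g. \<forall>b. sat g (((\<lambda>_. 0)(x := a))(y := b)) \<phi>}" for a
  have "S = (\<Union>a. C a)"
    using assms(2) unfolding defines_set_def models_def C_def by auto
  moreover have "\<forall>\<^sub>F g in agree_nhds f. g \<notin> C a" if "f \<notin> C a" for a f
  proof -
    from that obtain b where b: "\<not> sat f (((\<lambda>_. 0)(x := a))(y := b)) \<phi>"
      unfolding C_def by blast
    from eventually_sat_agree[OF assms(1), where f = f and s = "((\<lambda>_. 0)(x := a))(y := b)"]
    show ?thesis
      by eventually_elim (use b in \<open>auto simp: C_def\<close>)
  qed
  ultimately show ?thesis
    using overguessable_UN_closed by simp
qed

end
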